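(* Let $s\geq 1$ and $t\geq 3$ be integers. Let $G$ be a bipartite graph with bipartition $A\cup B$, $|B|=n$, which contains no copy of $L'_{s,t}$ as a subgraph, and suppose that $W(A)\geq 8(s+t)^2 n$. Then the number of light edges in $W_G$ (i.e. the number of unordered pairs of distinct vertices of $A$ forming a light edge) is at least $\frac{W(A)}{4(s+t)^3}$.
   Context: For a bipartite graph $G$ with bipartition $A\cup B$, write $d_G(u,v)=|N_G(u)\cap N_G(v)|$ for $u,v\in A$, where $N_G(x)$ is the neighbourhood of $x$ in $G$. The neighbourhood graph $W_G$ is the weighted graph on $A$ where the pair $uv$ has weight $d_G(u,v)$. For $U\subseteq A$, $W(U)=\sum_{\{u,v\}\in\binom{U}{2}} d_G(u,v)$. A pair $uv$ of distinct vertices of $A$ is a light edge if $1\leq d_G(u,v)<\binom{s+t-1}{2}$ and a heavy edge if $d_G(u,v)\geq\binom{s+t-1}{2}$. The subdivision of a graph $L$ is the bipartite graph with parts $V(L)$ and $E(L)$ in which $v\in V(L)$ is adjacent to $e\in E(L)$ iff $v$ is an endpoint of $e$. $L_{s,t}$ is the graph on vertex set $S\cup T$, $S\cap T=\emptyset$, $|S|=s$, $|T|=t-1$, where distinct $x,y$ are adjacent iff $x\in T$ or $y\in T$; $L'_{s,t}$ is its subdivision. *)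

theory Defs
  imports Complex_Main
begin

text \<open>A bipartite graph G with bipartition A \<union> B is given by finite sets
  A :: 'a set, B :: 'b set and an edge set E \<subseteq> A \<times> B.\<close>

definition bip_adj :: "('a \<times> 'b) set \<Rightarrow> 'a + 'b \<Rightarrow> 'a + 'b \<Rightarrow> bool" where
  "bip_adj E x y \<longleftrightarrow>
     (\<exists>a b. x = Inl a \<and> y = Inr b \<and> (a, b) \<in> E) \<or>
     (\<exists>a b. x = Inr b \<and> y = Inl a \<and> (a, b) \<in> E)"

text \<open>Common neighbourhood size of a set p of vertices of A (used for 2-sets {u,v}):
  d_G(u,v) = |N(u) \<inter> N(v)|.\<close>
definition codeg :: "'b set \<Rightarrow> ('a \<times> 'b) set \<Rightarrow> 'a set \<Rightarrow> nat" where
  "codeg B E p = card {b \<in> B. \<forall>u \<in> p. (u, b) \<in> E}"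

definition pairs2 :: "'a set \<Rightarrow> 'a set set" where
  "pairs2 U = {p. p \<subseteq> U \<and> card p = 2}"

definition Wsum :: "'b set \<Rightarrow> ('a \<times> 'b) set \<Rightarrow> 'a set \<Rightarrow> nat" where
  "Wsum B E U = (\<Sum>p \<in> pairs2 U. codeg B E p)"

definition light_edges :: "nat \<Rightarrow> nat \<Rightarrow> 'a set \<Rightarrow> 'b set \<Rightarrow> ('a \<times> 'b) set \<Rightarrow> 'a set set" where
  "light_edges s t A B E =
     {p \<in> pairs2 A. 1 \<le> codeg B E p \<and> codeg B E p < (s + t - 1) choose 2}"

text \<open>The graph L_{s,t}: vertex set S \<union> T with S = Inl ` {..<s}, T = Inr ` {..<t-1};
  distinct x, y adjacent iff x \<in> T or y \<in> T. Edges are represented as 2-sets.\<close>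
definition L_verts :: "nat \<Rightarrow> nat \<Rightarrow> (nat + nat) set" where
  "L_verts s t = Inl ` {..<s} \<union> Inr ` {..<t - 1}"

definition L_edges :: "nat \<Rightarrow> nat \<Rightarrow> (nat + nat) set set" where
  "L_edges s t = {{x, y} | x y. x \<in> L_verts s t \<and> y \<in> L_verts s t \<and> x \<noteq> y \<and>
                              (x \<in> Inr ` {..<t - 1} \<or> y \<in> Inr ` {..<t - 1})}"

text \<open>The subdivision L'_{s,t}: bipartite graph with parts V(L) and E(L),
  vertex v adjacent to edge e iff v \<in> e.\<close>
definition contains_Lsub :: "nat \<Rightarrow> nat \<Rightarrow> 'a set \<Rightarrow> 'b set \<Rightarrow> ('a \<times> 'b) set \<Rightarrow> bool" where
  "contains_Lsub s t A B E \<longleftrightarrow>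
     (\<exists>f :: (nat + nat) + (nat + nat) set \<Rightarrow> 'a + 'b.
        inj_on f (L_verts s t <+> L_edges s t) \<and>
        f ` (L_verts s t <+> L_edges s t) \<subseteq> A <+> B \<and>
        (\<forall>v \<in> L_verts s t. \<forall>e \<in> L_edges s t. v \<in> e \<longrightarrow> bip_adj E (f (Inl v)) (f (Inr e))))"

end

theory Submission
  imports Defs
begin

text \<open>Every neighbourhood N(b), b \<in> B, spans a weighted clique of W_G. If N(b) contained
  s + t - 1 vertices pairwise joined by heavy edges, their pairs (\<le> binom(s+t-1,2) of them)
  would each have at least binom(s+t-1,2) common neighbours, enough to pick distinct ones
  greedily, and this embeds L'_{s,t}. Hence the light edges inside N(b) form a graph with
  independence number at most k = s + t - 2, and Tur\'an's bound gives
  binom(|N(b)|,2) \<le> 2k L_b + 2k^2, where L_b counts light edges inside N(b). Summing over b,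
  W(A) = \<Sum>_b binom(|N(b)|,2), while \<Sum>_b L_b = \<Sum>_{light uv} d(u,v) is at most
  binom(s+t-1,2) times the number of light edges; the error term 2k^2 n is absorbed by the
  hypothesis W(A) \<ge> 8(s+t)^2 n.\<close>

lemma finite_pairs2: "finite V \<Longrightarrow> finite (pairs2 V)"
  by (rule finite_subset[of _ "Pow V"]) (auto simp: pairs2_def)

lemma card_pairs2: "finite V \<Longrightarrow> card (pairs2 V) = card V choose 2"
  unfolding pairs2_def by (rule n_subsets)

lemma pairs2_mono: "U \<subseteq> V \<Longrightarrow> pairs2 U \<subseteq> pairs2 V"
  unfolding pairs2_def by auto

lemma pairs2_insert_memE:
  assumes "p \<in> pairs2 (insert v I)" "p \<notin> pairs2 I"
  obtains u where "u \<in> I" "u \<noteq> v" "p = {u, v}"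
  using assms unfolding pairs2_def by (auto simp: card_2_iff)

lemma two_mult_choose_two: "2 * (n choose 2) = n * (n - 1)"
proof -
  have "even (n * (n - 1))" by (cases n) simp_all
  then show ?thesis by (simp add: choose_two)
qed

subsection \<open>Distinct representatives for large sets\<close>

lemma inj_choice_from_large_sets:
  assumes "finite I" "\<And>i. i \<in> I \<Longrightarrow> card I \<le> card (S i)"
  shows "\<exists>g. inj_on g I \<and> (\<forall>i\<in>I. g i \<in> S i)"
  using assms
proof (induction I rule: finite_induct)
  case empty
  show ?case by auto
next
  case (insert i F)
  then obtain g where g: "inj_on g F" "\<forall>j\<in>F. g j \<in> S j"
    by (metis card_insert_le insert_iff le_trans)
  have "\<not> S i \<subseteq> g ` F"
  proof
    assume "S i \<subseteq> g ` F"
    then have "card (S i) \<le> card F"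
      using insert.hyps(1) by (metis card_image_le card_mono finite_imageI le_trans)
    with insert.prems[of i] insert.hyps show False by simp
  qed
  then obtain x where "x \<in> S i" "x \<notin> g ` F" by auto
  with g insert.hyps(2)
  have "inj_on (g(i := x)) (insert i F) \<and> (\<forall>j\<in>insert i F. (g(i := x)) j \<in> S j)"
    unfolding inj_on_def by auto
  then show ?case by blast
qed

subsection \<open>A Tur\'an-type bound\<close>

definition independent :: "('a set \<Rightarrow> bool) \<Rightarrow> 'a set \<Rightarrow> bool" where
  "independent Q I \<longleftrightarrow> (\<forall>p\<in>pairs2 I. \<not> Q p)"

lemma maximal_independent_subset_dominates:
  assumes "finite V"
  obtains I where "I \<subseteq> V" "independent Q I" "\<And>v. v \<in> V - I \<Longrightarrow> \<exists>u\<in>I. Q {u, v}"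
proof -
  define Ind where "Ind = {I. I \<subseteq> V \<and> independent Q I}"
  have "finite Ind" "{} \<in> Ind"
    using assms by (auto simp: Ind_def independent_def pairs2_def)
  then obtain I where I: "I \<in> Ind" and max: "\<forall>J\<in>Ind. I \<subseteq> J \<longrightarrow> I = J"
    using finite_has_maximal by blast
  have "\<exists>u\<in>I. Q {u, v}" if v: "v \<in> V - I" for v
  proof (rule ccontr)
    assume no_nb: "\<not> (\<exists>u\<in>I. Q {u, v})"
    have "independent Q (insert v I)"
      unfolding independent_def
    proof
      fix p assume "p \<in> pairs2 (insert v I)"
      then show "\<not> Q p"
        using I no_nb by (cases "p \<in> pairs2 I")
          (auto simp: Ind_def independent_def insert_commute elim: pairs2_insert_memE)
    qed
    with I v have "insert v I \<in> Ind" by (auto simp: Ind_def)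
    with max v show False by blast
  qed
  with I show thesis using that by (auto simp: Ind_def)
qed

text \<open>Each vertex outside a dominating set I contributes a private edge to I.\<close>
lemma card_edges_ge_dominated:
  assumes "finite V" "I \<subseteq> V" and dom: "\<And>v. v \<in> V - I \<Longrightarrow> \<exists>u\<in>I. Q {u, v}"
  shows "card (V - I) + card {p \<in> pairs2 (V - I). Q p} \<le> card {p \<in> pairs2 V. Q p}"
proof -
  define nb where "nb v = (SOME u. u \<in> I \<and> Q {u, v})" for v
  have nb: "nb v \<in> I" "Q {nb v, v}" if "v \<in> V - I" for v
    using someI_ex[OF dom[OF that, unfolded Bex_def]] that by (auto simp: nb_def)
  define F where "F = (\<lambda>v. {nb v, v}) ` (V - I)"
  have "inj_on (\<lambda>v. {nb v, v}) (V - I)"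
    by (rule inj_onI) (metis DiffD2 doubleton_eq_iff nb(1))
  then have "card F = card (V - I)" by (simp add: F_def card_image)
  moreover have "F \<inter> {p \<in> pairs2 (V - I). Q p} = {}"
    using nb by (auto simp: F_def pairs2_def)
  moreover have "F \<union> {p \<in> pairs2 (V - I). Q p} \<subseteq> {p \<in> pairs2 V. Q p}"
    using nb assms(2) by (auto simp: F_def pairs2_def card_2_iff) metis+
  moreover have "finite {p \<in> pairs2 V. Q p}" using finite_pairs2[OF assms(1)] by simp
  ultimately show ?thesis
    using assms(1) by (metis (no_types, lifting) card_Un_disjoint card_mono finite_Un rev_finite_subset)
qed

theorem card_sq_le_by_independence:
  assumes "finite V" "\<And>I. I \<subseteq> V \<Longrightarrow> independent Q I \<Longrightarrow> card I \<le> k"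
  shows "card V ^ 2 \<le> 2 * k * card {p \<in> pairs2 V. Q p} + k * card V"
  using assms
proof (induction "card V" arbitrary: V rule: less_induct)
  case less
  obtain I where I: "I \<subseteq> V" "independent Q I" "\<And>v. v \<in> V - I \<Longrightarrow> \<exists>u\<in>I. Q {u, v}"
    using maximal_independent_subset_dominates[OF less.prems(1)] by blast
  show ?case
  proof (cases "I = {}")
    case True
    with I(3) have "V = {}" by auto
    then show ?thesis by simp
  next
    case False
    define d e where "d = card (V - I)" and "e = card {p \<in> pairs2 (V - I). Q p}"
    have "card (V - I) < card V"
      using False I(1) less.prems(1) by (intro psubset_card_mono) auto
    then have IH: "d ^ 2 \<le> 2 * k * e + k * d"
      unfolding d_def e_def using less by (intro less.hyps) auto
    have i: "card I \<le> k" using less.prems(2) I by blast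
    have de: "d + e \<le> card {p \<in> pairs2 V. Q p}"
      unfolding d_def e_def using card_edges_ge_dominated[OF less.prems(1) I(1,3)] .
    have cV: "card V = d + card I"
      unfolding d_def using I(1) less.prems(1) by (simp add: card_Diff_subset card_mono finite_subset)
    have "d * card I \<le> d * k" "card I * card I \<le> k * card I"
      using i by simp_all
    then have "(d + card I) ^ 2 \<le> d ^ 2 + 2 * d * k + k * card I"
      by (simp only: power2_eq_square algebra_simps)
    also have "\<dots> \<le> 2 * k * (d + e) + k * (d + card I)"
      using IH by (simp add: algebra_simps)
    also have "\<dots> \<le> 2 * k * card {p \<in> pairs2 V. Q p} + k * card V"
      using de cV by simp
    finally show ?thesis using cV by simp
  qed
qed

corollary choose_two_le_by_independence:
  assumes "finite V" "\<And>I. I \<subseteq> V \<Longrightarrow> independent Q I \<Longrightarrow> card I \<le> k"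
  shows "card V choose 2 \<le> 2 * k * card {p \<in> pairs2 V. Q p} + 2 * k ^ 2"
proof -
  define x y where "x = card V" and "y = card {p \<in> pairs2 V. Q p}"
  have "x ^ 2 \<le> 2 * k * y + k * x"
    unfolding x_def y_def by (rule card_sq_le_by_independence[OF assms])
  moreover have "real (2 * (k * x)) \<le> real (x ^ 2 + k ^ 2)"
    using sum_squares_bound[of "real k" "real x"] by (simp add: power2_eq_square algebra_simps)
  then have "2 * (k * x) \<le> x ^ 2 + k ^ 2"
    by (simp only: of_nat_le_iff)
  moreover have "2 * (x choose 2) \<le> x ^ 2"
    by (simp add: two_mult_choose_two power2_eq_square)
  ultimately show ?thesis unfolding x_def y_def by linarith
qed

subsection \<open>Embedding $L'_{s,t}$ into a heavy clique\<close>

lemma card_L_verts: "t \<ge> 1 \<Longrightarrow> card (L_verts s t) = s + t - 1"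
  unfolding L_verts_def by (subst card_Un_disjoint) (auto simp: card_image)

lemma finite_L_verts: "finite (L_verts s t)"
  unfolding L_verts_def by simp

lemma L_edges_subset_pairs2: "L_edges s t \<subseteq> pairs2 (L_verts s t)"
  unfolding L_edges_def pairs2_def by auto

lemma card_L_edges_le:
  assumes "t \<ge> 1" shows "card (L_edges s t) \<le> (s + t - 1) choose 2"
proof -
  have "card (L_edges s t) \<le> card (pairs2 (L_verts s t))"
    by (rule card_mono[OF finite_pairs2[OF finite_L_verts] L_edges_subset_pairs2])
  with assms show ?thesis by (simp add: card_pairs2 finite_L_verts card_L_verts)
qed

lemma contains_LsubI:
  assumes "inj_on \<phi> (L_verts s t)" "\<phi> ` L_verts s t \<subseteq> A"
    and "inj_on g (L_edges s t)" "g ` L_edges s t \<subseteq> B"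
    and "\<And>v e. v \<in> L_verts s t \<Longrightarrow> e \<in> L_edges s t \<Longrightarrow> v \<in> e \<Longrightarrow> (\<phi> v, g e) \<in> E"
  shows "contains_Lsub s t A B E"
proof -
  define f :: "(nat + nat) + (nat + nat) set \<Rightarrow> _" where "f = case_sum (Inl \<circ> \<phi>) (Inr \<circ> g)"
  have "inj_on f (L_verts s t <+> L_edges s t)"
  proof (rule inj_onI)
    fix x y assume "x \<in> L_verts s t <+> L_edges s t" "y \<in> L_verts s t <+> L_edges s t" "f x = f y"
    then show "x = y"
      by (cases x; cases y) (auto simp: f_def dest: inj_onD[OF assms(1)] inj_onD[OF assms(3)])
  qed
  moreover have "f ` (L_verts s t <+> L_edges s t) \<subseteq> A <+> B"
    using assms(2,4) by (auto simp: f_def)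
  moreover have "\<forall>v\<in>L_verts s t. \<forall>e\<in>L_edges s t. v \<in> e \<longrightarrow> bip_adj E (f (Inl v)) (f (Inr e))"
    using assms(5) by (auto simp: f_def bip_adj_def)
  ultimately show ?thesis unfolding contains_Lsub_def by blast
qed

text \<open>The weight bound lets the edges of $L_{s,t}$ pick distinct common neighbours greedily.\<close>
theorem contains_Lsub_if_heavy_clique:
  assumes "finite B" "s \<ge> 1" "t \<ge> 1" "X \<subseteq> A" "card X = s + t - 1"
    and heavy: "\<And>p. p \<in> pairs2 X \<Longrightarrow> (s + t - 1) choose 2 \<le> codeg B E p"
  shows "contains_Lsub s t A B E"
proof -
  have "finite X" using assms(2,3,5) by (intro card_ge_0_finite) simp
  moreover have "card (L_verts s t) = card X" using card_L_verts[OF assms(3)] assms(5) by simp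
  ultimately obtain \<phi> where \<phi>: "bij_betw \<phi> (L_verts s t) X"
    using finite_same_card_bij[OF finite_L_verts] by blast
  define S where "S e = {b \<in> B. \<forall>u\<in>\<phi> ` e. (u, b) \<in> E}" for e
  have "card (L_edges s t) \<le> card (S e)" if e: "e \<in> L_edges s t" for e
  proof -
    have "e \<in> pairs2 (L_verts s t)" using e L_edges_subset_pairs2 by blast
    then have "\<phi> ` e \<in> pairs2 X"
      using \<phi> by (auto simp: pairs2_def bij_betw_def card_image inj_on_subset)
    have "card (L_edges s t) \<le> (s + t - 1) choose 2" by (rule card_L_edges_le[OF assms(3)])
    also have "\<dots> \<le> codeg B E (\<phi> ` e)" by (rule heavy) fact
    finally show ?thesis by (simp add: S_def codeg_def)
  qed
  then obtain g where g: "inj_on g (L_edges s t)" "\<And>e. e \<in> L_edges s t \<Longrightarrow> g e \<in> S e"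
    using inj_choice_from_large_sets[OF finite_subset[OF L_edges_subset_pairs2 finite_pairs2[OF finite_L_verts]]]
    by blast
  show ?thesis
  proof (rule contains_LsubI[OF bij_betw_imp_inj_on[OF \<phi>] _ g(1)])
    show "\<phi> ` L_verts s t \<subseteq> A" using \<phi> assms(4) by (auto simp: bij_betw_def)
    show "g ` L_edges s t \<subseteq> B" using g(2) by (auto simp: S_def)
    show "(\<phi> v, g e) \<in> E" if "v \<in> L_verts s t" "e \<in> L_edges s t" "v \<in> e" for v e
      using g(2)[OF that(2)] that(3) by (auto simp: S_def)
  qed
qed

subsection \<open>Double counting\<close>

definition nbhd :: "('a \<times> 'b) set \<Rightarrow> 'a set \<Rightarrow> 'b \<Rightarrow> 'a set" where
  "nbhd E A b = {a \<in> A. (a, b) \<in> E}"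

lemma sum_codeg_eq_sum_common:
  assumes "finite B" "finite F"
  shows "(\<Sum>p\<in>F. codeg B E p) = (\<Sum>b\<in>B. card {p \<in> F. \<forall>u\<in>p. (u, b) \<in> E})"
proof -
  have "(\<Sum>p\<in>F. codeg B E p) = (\<Sum>p\<in>F. \<Sum>b\<in>B. if \<forall>u\<in>p. (u, b) \<in> E then 1 else 0)"
    unfolding codeg_def using assms by (simp add: sum.inter_filter[symmetric])
  also have "\<dots> = (\<Sum>b\<in>B. \<Sum>p\<in>F. if \<forall>u\<in>p. (u, b) \<in> E then 1 else 0)"
    by (rule sum.swap)
  also have "\<dots> = (\<Sum>b\<in>B. card {p \<in> F. \<forall>u\<in>p. (u, b) \<in> E})"
    using assms by (simp add: sum.inter_filter[symmetric])
  finally show ?thesis .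
qed

lemma finite_nbhd: "finite A \<Longrightarrow> finite (nbhd E A b)"
  by (simp add: nbhd_def)

lemma pairs2_nbhd: "{p \<in> pairs2 A. \<forall>u\<in>p. (u, b) \<in> E} = pairs2 (nbhd E A b)"
  by (auto simp: pairs2_def nbhd_def)

lemma common_nbr_pairs_eq:
  "F \<subseteq> pairs2 A \<Longrightarrow> {p \<in> F. \<forall>u\<in>p. (u, b) \<in> E} = {p \<in> pairs2 (nbhd E A b). p \<in> F}"
  by (auto simp: pairs2_def nbhd_def)

lemma Wsum_eq_sum_choose_two:
  assumes "finite A" "finite B"
  shows "Wsum B E A = (\<Sum>b\<in>B. card (nbhd E A b) choose 2)"
  unfolding Wsum_def sum_codeg_eq_sum_common[OF assms(2) finite_pairs2[OF assms(1)]]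
  using assms(1) by (simp add: pairs2_nbhd card_pairs2 finite_nbhd)

lemma independent_light_in_nbhd_small:
  assumes "finite B" "b \<in> B" "s \<ge> 1" "t \<ge> 1" and free: "\<not> contains_Lsub s t A B E"
    and I: "I \<subseteq> nbhd E A b" "independent (\<lambda>p. p \<in> light_edges s t A B E) I"
  shows "card I \<le> s + t - 2"
proof (rule ccontr)
  assume "\<not> card I \<le> s + t - 2"
  then obtain X where X: "X \<subseteq> I" "card X = s + t - 1"
    using obtain_subset_with_card_n[of "s + t - 1" I] by force
  have "(s + t - 1) choose 2 \<le> codeg B E p" if p: "p \<in> pairs2 X" for p
  proof -
    have pI: "p \<in> pairs2 I" using p X(1) pairs2_mono by blast
    then have "p \<in> pairs2 A" using I(1) by (auto simp: nbhd_def pairs2_def)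
    moreover have "b \<in> {b \<in> B. \<forall>u\<in>p. (u, b) \<in> E}"
      using assms(2) I(1) pI by (auto simp: pairs2_def nbhd_def)
    then have "1 \<le> codeg B E p"
      unfolding codeg_def using assms(1) by (simp add: Suc_le_eq card_gt_0_iff) blast
    ultimately show ?thesis using I(2) pI by (auto simp: independent_def light_edges_def)
  qed
  moreover have "X \<subseteq> A" using X(1) I(1) by (auto simp: nbhd_def)
  ultimately have "contains_Lsub s t A B E"
    using contains_Lsub_if_heavy_clique[OF assms(1,3,4) _ X(2)] by blast
  with free show False ..
qed

theorem Wsum_le_light_edges:
  assumes "finite A" "finite B" "s \<ge> 1" "t \<ge> 1" "\<not> contains_Lsub s t A B E"
  defines "k \<equiv> s + t - 2"
  shows "Wsum B E A \<le> 2 * k * ((s + t - 1) choose 2) * card (light_edges s t A B E) + 2 * k ^ 2 * card B"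
proof -
  define LE where "LE = light_edges s t A B E"
  define L where "L b = card {p \<in> pairs2 (nbhd E A b). p \<in> LE}" for b
  have LE: "LE \<subseteq> pairs2 A" "finite LE"
    using finite_pairs2[OF assms(1)] by (auto simp: LE_def light_edges_def intro: finite_subset)
  have "card (nbhd E A b) choose 2 \<le> 2 * k * L b + 2 * k ^ 2" if "b \<in> B" for b
    unfolding L_def
  proof (rule choose_two_le_by_independence[OF finite_nbhd[OF assms(1)]])
    fix I assume "I \<subseteq> nbhd E A b" "independent (\<lambda>p. p \<in> LE) I"
    then show "card I \<le> k"
      unfolding k_def LE_def by (rule independent_light_in_nbhd_small[OF assms(2) that assms(3-5)])
  qed
  then have "Wsum B E A \<le> (\<Sum>b\<in>B. 2 * k * L b + 2 * k ^ 2)"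
    unfolding Wsum_eq_sum_choose_two[OF assms(1,2)] by (rule sum_mono)
  also have "\<dots> = 2 * k * (\<Sum>b\<in>B. L b) + 2 * k ^ 2 * card B"
    by (simp add: sum.distrib sum_distrib_left)
  also have "(\<Sum>b\<in>B. L b) = (\<Sum>p\<in>LE. codeg B E p)"
    unfolding sum_codeg_eq_sum_common[OF assms(2) LE(2)] L_def common_nbr_pairs_eq[OF LE(1)] ..
  also have "(\<Sum>p\<in>LE. codeg B E p) \<le> card LE * ((s + t - 1) choose 2)"
    using sum_bounded_above[of LE "codeg B E"] by (simp add: LE_def light_edges_def less_imp_le)
  finally show ?thesis by (simp add: LE_def ac_simps)
qed

lemma two_mult_pred_choose_two_le_cube:
  "2 * (m - 2) * ((m - 1) choose 2) \<le> m ^ 3"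
proof -
  have "2 * ((m - 1) choose 2) \<le> m * m"
    by (simp add: two_mult_choose_two mult_le_mono)
  then have "(m - 2) * (2 * ((m - 1) choose 2)) \<le> m * (m * m)"
    by (rule mult_le_mono[OF diff_le_self])
  then show ?thesis by (simp add: power3_eq_cube ac_simps)
qed

theorem lemma10:
  fixes s t n :: nat and A :: "'a set" and B :: "'b set" and E :: "('a \<times> 'b) set"
  assumes "s \<ge> 1" and "t \<ge> 3"
    and "finite A" and "finite B" and "E \<subseteq> A \<times> B" and "card B = n"
    and "\<not> contains_Lsub s t A B E"
    and "real (Wsum B E A) \<ge> 8 * (real s + real t)^2 * real n"
  shows "real (card (light_edges s t A B E)) \<ge> real (Wsum B E A) / (4 * (real s + real t)^3)"
proof -
  define m where "m = s + t"
  define w c where "w = real (Wsum B E A)" and "c = real (card (light_edges s t A B E))"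
  have "Wsum B E A \<le> 2 * (m - 2) * ((m - 1) choose 2) * card (light_edges s t A B E) + 2 * (m - 2) ^ 2 * n"
    using Wsum_le_light_edges[OF assms(3,4,1) _ assms(7)] assms(2,6) by (simp add: m_def)
  also have "\<dots> \<le> m ^ 3 * card (light_edges s t A B E) + 2 * m ^ 2 * n"
    by (intro add_mono mult_le_mono two_mult_pred_choose_two_le_cube power_mono) simp_all
  finally have "real (Wsum B E A) \<le> real (m ^ 3 * card (light_edges s t A B E) + 2 * m ^ 2 * n)"
    by (simp only: of_nat_le_iff)
  then have "w \<le> real m ^ 3 * c + 2 * real m ^ 2 * real n"
    by (simp add: w_def c_def)
  moreover have "8 * real m ^ 2 * real n \<le> w" "0 < real m ^ 3"
    using assms(2,8) by (simp_all add: w_def m_def)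
  moreover have "0 \<le> real m ^ 3 * c" by (simp add: c_def)
  ultimately have "w \<le> (4 * real m ^ 3) * c" by linarith
  with \<open>0 < real m ^ 3\<close> show ?thesis
    by (simp add: w_def c_def m_def divide_le_eq mult.commute)
qed

end
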